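(* Let $x,y,z>0$. Let $s\in\mathbb{R}^n$ be a deterministic vector with $\|s\|^2/n=x$ and let $\hat s\in\mathbb{R}^n$ have i.i.d. $\mathcal{N}(0,y)$ entries. Then there is a constant $\kappa>0$ not depending on $n$ such that for all sufficiently large $n$, $$\frac{\kappa}{\sqrt n}e^{-nf(x,y,z)}\le\mathbb{P}\Big(\frac1n\|\hat s-s\|^2\le z\Big)\le e^{-nf(x,y,z)},$$ where $f(x,y,z)=\frac{x+z}{2y}-\frac{xz}{\mathsf{A}y}-\frac{\mathsf{A}}{4y}-\frac12\ln\frac{\mathsf A}{2x}$ if $z\le x+y$ and $f(x,y,z)=0$ otherwise, with $\mathsf A=\sqrt{y^2+4xz}-y$. *)

theory Defs
  imports "HOL-Probability.Probability"
begin

definition cA :: "real \<Rightarrow> real \<Rightarrow> real \<Rightarrow> real" where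
  "cA x y z = sqrt (y\<^sup>2 + 4 * x * z) - y"

definition rate_f :: "real \<Rightarrow> real \<Rightarrow> real \<Rightarrow> real" where
  "rate_f x y z =
     (if z \<le> x + y then
        (x + z) / (2 * y) - x * z / (cA x y z * y) - cA x y z / (4 * y)
          - 1/2 * ln (cA x y z / (2 * x))
      else 0)"

text \<open>Law of a vector in R^n (coordinates indexed by {0..<n}) with i.i.d.
  N(0,y) entries; y is the variance, so the standard deviation is sqrt y.\<close>
definition gauss_vec :: "nat \<Rightarrow> real \<Rightarrow> (nat \<Rightarrow> real) measure" where
  "gauss_vec n y = (\<Pi>\<^sub>M i\<in>{0..<n}. density lborel (normal_density 0 (sqrt y)))"

end

theory Submission
  imports Defs
begin

text \<open>The law of \<open>\<parallel>w - s\<parallel>\<^sup>2\<close> for a Gaussian vector \<open>w\<close> depends on \<open>s\<close> only through \<open>\<parallel>s\<parallel> = sqrt (n x)\<close>,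
  by rotation invariance of the Gaussian: it is the convolution of a noncentral chi-square law with
  one degree of freedom and noncentrality \<open>\<parallel>s\<parallel>\<close> with a central chi-square law with \<open>n - 1\<close>
  degrees of freedom, all for noise variance \<open>y\<close>. Tilting by \<open>exp (- \<lambda> t)\<close> maps each of these
  laws to one of the same kind, with noise variance \<open>y / u\<close> and noncentrality \<open>\<parallel>s\<parallel> / u\<close>,
  where \<open>u = 1 + 2 \<lambda> y\<close>, at the cost of an explicit normalising factor. For \<open>u = 2 x / A\<close> the
  tilted mean \<open>n (x / u\<^sup>2 + y / u)\<close> equals \<open>n z\<close> and the factor is \<open>exp (- n f + \<lambda> n z)\<close>,
  so the Chernoff bound gives the upper estimate. For the lower estimate it suffices that the tilted
  law puts mass of order \<open>1 / \<surd>n\<close> on the window \<open>[n z - 1, n z]\<close>: its chi-square part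
  concentrates within \<open>O(\<surd>n)\<close> of its mean, and the one-dimensional noncentral part has density
  of order \<open>1 / \<surd>n\<close> there. For \<open>z > x + y\<close> the rate vanishes and monotonicity in \<open>z\<close>
  reduces to the case \<open>z = x + y\<close>.\<close>

section \<open>Gaussian and chi-square laws\<close>

definition gaussian :: "real \<Rightarrow> real measure" where
  "gaussian \<sigma> = density lborel (normal_density 0 \<sigma>)"

definition ncchi2 :: "real \<Rightarrow> real \<Rightarrow> real measure" where
  "ncchi2 \<sigma> a = distr (gaussian \<sigma>) borel (\<lambda>g. (g - a)\<^sup>2)"

fun chi2 :: "real \<Rightarrow> nat \<Rightarrow> real measure" where
  "chi2 \<sigma> 0 = return borel 0"
| "chi2 \<sigma> (Suc k) = (chi2 \<sigma> k \<star> ncchi2 \<sigma> 0)"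

lemma sets_gaussian [measurable_cong, simp]: "sets (gaussian \<sigma>) = sets borel"
  by (simp add: gaussian_def)

lemma space_gaussian [simp]: "space (gaussian \<sigma>) = UNIV"
  by (simp add: gaussian_def)

lemma prob_space_gaussian: "\<sigma> > 0 \<Longrightarrow> prob_space (gaussian \<sigma>)"
  by (simp add: gaussian_def prob_space_normal_density)

lemma sets_ncchi2 [measurable_cong, simp]: "sets (ncchi2 \<sigma> a) = sets borel"
  by (simp add: ncchi2_def)

lemma space_ncchi2 [simp]: "space (ncchi2 \<sigma> a) = UNIV"
  by (simp add: ncchi2_def)

lemma prob_space_ncchi2: "\<sigma> > 0 \<Longrightarrow> prob_space (ncchi2 \<sigma> a)"
  unfolding ncchi2_def by (rule prob_space.prob_space_distr[OF prob_space_gaussian]) auto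

lemma finite_measure_ncchi2: "\<sigma> > 0 \<Longrightarrow> finite_measure (ncchi2 \<sigma> a)"
  using prob_space_ncchi2 prob_space.axioms(1) by blast

lemma nn_integral_ncchi2:
  "F \<in> borel_measurable borel \<Longrightarrow>
   (\<integral>\<^sup>+t. F t \<partial>ncchi2 \<sigma> a) = (\<integral>\<^sup>+g. ennreal (normal_density 0 \<sigma> g) * F ((g - a)\<^sup>2) \<partial>lborel)"
  by (simp add: ncchi2_def gaussian_def nn_integral_distr nn_integral_density)

lemma emeasure_ncchi2:
  "A \<in> sets borel \<Longrightarrow>
   emeasure (ncchi2 \<sigma> a) A = (\<integral>\<^sup>+g. ennreal (normal_density 0 \<sigma> g) * indicator A ((g - a)\<^sup>2) \<partial>lborel)"
  by (simp flip: nn_integral_ncchi2 add: nn_integral_indicator)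

lemma prob_space_convolution:
  fixes M N :: "real measure"
  assumes "prob_space M" "prob_space N" "sets M = sets borel" "sets N = sets borel"
  shows "prob_space (M \<star> N)"
proof -
  have "(\<lambda>(x::real, y). x + y) \<in> measurable (M \<Otimes>\<^sub>M N) borel"
    using assms(3,4) by (simp add: measurable_cong_sets[OF sets_pair_measure_cong[OF assms(3,4)] refl])
  then show ?thesis unfolding convolution_def
    by (rule prob_space.prob_space_distr[OF prob_space_pair[OF assms(1,2)]])
qed

lemma sets_chi2 [measurable_cong, simp]: "sets (chi2 \<sigma> k) = sets borel"
  by (cases k) auto

lemma space_chi2 [simp]: "space (chi2 \<sigma> k) = UNIV"
  by (cases k) auto

lemma prob_space_chi2: "\<sigma> > 0 \<Longrightarrow> prob_space (chi2 \<sigma> k)"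
  by (induction k) (auto intro!: prob_space_convolution prob_space_ncchi2 prob_space_return)

lemma finite_measure_chi2: "\<sigma> > 0 \<Longrightarrow> finite_measure (chi2 \<sigma> k)"
  using prob_space_chi2 prob_space.axioms(1) by blast

section \<open>Exponential tilting\<close>

definition exp_tilt :: "real measure \<Rightarrow> real measure \<Rightarrow> real \<Rightarrow> real \<Rightarrow> bool" where
  "exp_tilt M M' c l \<longleftrightarrow> (\<forall>F \<in> borel_measurable borel.
     (\<integral>\<^sup>+t. F t \<partial>M) = (\<integral>\<^sup>+t. ennreal (c * exp (l * t)) * F t \<partial>M'))"

lemma normal_density_tilt:
  fixes \<sigma> l a g :: real
  assumes "\<sigma> > 0" and u: "u > 0" "1 + 2 * l * \<sigma>\<^sup>2 = u"
  shows "normal_density 0 \<sigma> g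
           = normal_density 0 (\<sigma> / sqrt u) (a / u - a + g) * (exp (- l * a\<^sup>2 / u) / sqrt u * exp (l * (g - a)\<^sup>2))"
proof -
  have var: "(\<sigma> / sqrt u)\<^sup>2 = \<sigma>\<^sup>2 / u"
    using u by (simp add: power_divide)
  have "sqrt (2 * pi * (\<sigma>\<^sup>2 / u)) * sqrt u = sqrt (2 * pi * (\<sigma>\<^sup>2 / u) * u)"
    by (rule real_sqrt_mult[symmetric])
  also have "2 * pi * (\<sigma>\<^sup>2 / u) * u = 2 * pi * \<sigma>\<^sup>2"
    using u by simp
  finally have norm: "sqrt (2 * pi * (\<sigma>\<^sup>2 / u)) * sqrt u = sqrt (2 * pi * \<sigma>\<^sup>2)" .
  have l: "l = (u - 1) / (2 * \<sigma>\<^sup>2)"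
    using assms by (auto simp: field_simps)
  have "- (a / u - a + g)\<^sup>2 / (2 * (\<sigma>\<^sup>2 / u)) + (- l * a\<^sup>2 / u) + l * (g - a)\<^sup>2 + g\<^sup>2 / (2 * \<sigma>\<^sup>2)
      = (- (a - a * u + g * u)\<^sup>2 - (u - 1) * a\<^sup>2 + u * (u - 1) * (g - a)\<^sup>2 + u * g\<^sup>2) / (2 * \<sigma>\<^sup>2 * u)"
    using assms unfolding l by (simp add: field_simps power2_eq_square)
  also have "- (a - a * u + g * u)\<^sup>2 - (u - 1) * a\<^sup>2 + u * (u - 1) * (g - a)\<^sup>2 + u * g\<^sup>2 = 0"
    by (simp add: algebra_simps power2_eq_square)
  finally have expo: "- (a / u - a + g)\<^sup>2 / (2 * (\<sigma>\<^sup>2 / u)) + (- l * a\<^sup>2 / u) + l * (g - a)\<^sup>2 = - g\<^sup>2 / (2 * \<sigma>\<^sup>2)"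
    by simp
  have "normal_density 0 (\<sigma> / sqrt u) (a / u - a + g) * (exp (- l * a\<^sup>2 / u) / sqrt u * exp (l * (g - a)\<^sup>2))
     = 1 / (sqrt (2 * pi * (\<sigma>\<^sup>2 / u)) * sqrt u)
         * exp (- (a / u - a + g)\<^sup>2 / (2 * (\<sigma>\<^sup>2 / u)) + (- l * a\<^sup>2 / u) + l * (g - a)\<^sup>2)"
    unfolding normal_density_def var exp_add by (simp add: field_simps)
  also have "\<dots> = normal_density 0 \<sigma> g"
    unfolding norm expo normal_density_def by (simp add: power2_eq_square)
  finally show ?thesis by simp
qed

lemma exp_tilt_ncchi2:
  assumes "\<sigma> > 0" "u > 0" "1 + 2 * l * \<sigma>\<^sup>2 = u"
  shows "exp_tilt (ncchi2 \<sigma> a) (ncchi2 (\<sigma> / sqrt u) (a / u)) (exp (- l * a\<^sup>2 / u) / sqrt u) l"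
  unfolding exp_tilt_def
proof (intro ballI)
  fix F :: "real \<Rightarrow> ennreal"
  assume F[measurable]: "F \<in> borel_measurable borel"
  define c where "c = exp (- l * a\<^sup>2 / u) / sqrt u"
  have "c \<ge> 0"
    using assms by (simp add: c_def)
  have "(\<integral>\<^sup>+t. ennreal (c * exp (l * t)) * F t \<partial>ncchi2 (\<sigma> / sqrt u) (a / u))
      = (\<integral>\<^sup>+h. ennreal (normal_density 0 (\<sigma> / sqrt u) h)
                 * (ennreal (c * exp (l * (h - a / u)\<^sup>2)) * F ((h - a / u)\<^sup>2)) \<partial>lborel)"
    by (subst nn_integral_ncchi2) auto
  also have "\<dots> = (\<integral>\<^sup>+g. ennreal (normal_density 0 (\<sigma> / sqrt u) (a / u - a + g))
                 * (ennreal (c * exp (l * (a / u - a + g - a / u)\<^sup>2)) * F ((a / u - a + g - a / u)\<^sup>2)) \<partial>lborel)"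
    by (subst nn_integral_real_affine[where c = 1 and t = "a / u - a"]) auto
  also have "\<dots> = (\<integral>\<^sup>+g. ennreal (normal_density 0 \<sigma> g) * F ((g - a)\<^sup>2) \<partial>lborel)"
  proof (rule nn_integral_cong)
    fix g :: real
    have "normal_density 0 (\<sigma> / sqrt u) (a / u - a + g) * (c * exp (l * (g - a)\<^sup>2)) = normal_density 0 \<sigma> g"
      using normal_density_tilt[OF assms, of g a] unfolding c_def by simp
    then show "ennreal (normal_density 0 (\<sigma> / sqrt u) (a / u - a + g))
                 * (ennreal (c * exp (l * (a / u - a + g - a / u)\<^sup>2)) * F ((a / u - a + g - a / u)\<^sup>2))
             = ennreal (normal_density 0 \<sigma> g) * F ((g - a)\<^sup>2)"
      using \<open>c \<ge> 0\<close> by (simp add: ennreal_mult[symmetric] mult.assoc[symmetric])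
  qed
  also have "\<dots> = (\<integral>\<^sup>+t. F t \<partial>ncchi2 \<sigma> a)"
    by (subst nn_integral_ncchi2) auto
  finally show "(\<integral>\<^sup>+t. F t \<partial>ncchi2 \<sigma> a) = (\<integral>\<^sup>+t. ennreal (c * exp (l * t)) * F t \<partial>ncchi2 (\<sigma> / sqrt u) (a / u))"
    by simp
qed

lemma exp_tilt_convolution:
  assumes fin: "finite_measure M" "finite_measure N" "finite_measure M'" "finite_measure N'"
    and sets[measurable_cong]: "sets M = sets borel" "sets N = sets borel" "sets M' = sets borel" "sets N' = sets borel"
    and tilt: "exp_tilt M M' c1 l" "exp_tilt N N' c2 l" and c: "c1 \<ge> 0" "c2 \<ge> 0"
  shows "exp_tilt (M \<star> N) (M' \<star> N') (c1 * c2) l"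
  unfolding exp_tilt_def
proof (intro ballI)
  fix F :: "real \<Rightarrow> ennreal"
  assume F[measurable]: "F \<in> borel_measurable borel"
  interpret N': finite_measure N' by fact
  have "(\<integral>\<^sup>+t. F t \<partial>(M \<star> N)) = (\<integral>\<^sup>+x. \<integral>\<^sup>+y. F (x + y) \<partial>N \<partial>M)"
    using fin sets by (subst nn_integral_convolution) auto
  also have "\<dots> = (\<integral>\<^sup>+x. \<integral>\<^sup>+y. ennreal (c2 * exp (l * y)) * F (x + y) \<partial>N' \<partial>M)"
    using tilt(2) unfolding exp_tilt_def by (intro nn_integral_cong) auto
  also have "\<dots> = (\<integral>\<^sup>+x. ennreal (c1 * exp (l * x)) * (\<integral>\<^sup>+y. ennreal (c2 * exp (l * y)) * F (x + y) \<partial>N') \<partial>M')"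
  proof -
    have "(\<lambda>x. \<integral>\<^sup>+y. ennreal (c2 * exp (l * y)) * F (x + y) \<partial>N') \<in> borel_measurable borel"
      by measurable
    then show ?thesis
      using tilt(1) unfolding exp_tilt_def by auto
  qed
  also have "\<dots> = (\<integral>\<^sup>+x. \<integral>\<^sup>+y. ennreal (c1 * c2 * exp (l * (x + y))) * F (x + y) \<partial>N' \<partial>M')"
  proof (intro nn_integral_cong)
    fix x
    have "ennreal (c1 * exp (l * x)) * ennreal (c2 * exp (l * y)) = ennreal (c1 * c2 * exp (l * (x + y)))" for y
      using c by (simp add: ennreal_mult[symmetric] exp_add distrib_left mult_ac)
    then show "ennreal (c1 * exp (l * x)) * (\<integral>\<^sup>+y. ennreal (c2 * exp (l * y)) * F (x + y) \<partial>N')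
             = (\<integral>\<^sup>+y. ennreal (c1 * c2 * exp (l * (x + y))) * F (x + y) \<partial>N')"
      by (subst nn_integral_cmult[symmetric]) (auto simp: mult.assoc[symmetric])
  qed
  also have "\<dots> = (\<integral>\<^sup>+t. ennreal (c1 * c2 * exp (l * t)) * F t \<partial>(M' \<star> N'))"
    using fin sets by (subst nn_integral_convolution) auto
  finally show "(\<integral>\<^sup>+t. F t \<partial>(M \<star> N)) = (\<integral>\<^sup>+t. ennreal (c1 * c2 * exp (l * t)) * F t \<partial>(M' \<star> N'))" .
qed

lemma exp_tilt_chi2:
  assumes "\<sigma> > 0" "u > 0" "1 + 2 * l * \<sigma>\<^sup>2 = u"
  shows "exp_tilt (chi2 \<sigma> k) (chi2 (\<sigma> / sqrt u) k) ((1 / sqrt u) ^ k) l"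
proof (induction k)
  case 0
  then show ?case
    by (simp add: exp_tilt_def nn_integral_return)
next
  case (Suc k)
  have "\<sigma> / sqrt u > 0"
    using assms by simp
  then have "exp_tilt (chi2 \<sigma> k \<star> ncchi2 \<sigma> 0) (chi2 (\<sigma> / sqrt u) k \<star> ncchi2 (\<sigma> / sqrt u) 0)
               ((1 / sqrt u) ^ k * (1 / sqrt u)) l"
    using exp_tilt_ncchi2[OF assms, of 0] assms
    by (intro exp_tilt_convolution[OF _ _ _ _ _ _ _ _ Suc.IH])
       (simp_all add: finite_measure_chi2 finite_measure_ncchi2)
  then show ?case
    unfolding chi2.simps power_Suc2 .
qed

lemma power_inverse_sqrt_eq_exp:
  fixes u :: real
  assumes "u > 0"
  shows "(1 / sqrt u) ^ k = exp (- real k * ln u / 2)"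
proof -
  have "1 / sqrt u = exp (- ln u / 2)"
    using assms by (simp add: sqrt_def exp_minus ln_sqrt[symmetric] inverse_eq_divide)
  then show ?thesis
    by (simp add: exp_of_nat_mult[symmetric])
qed

lemma exp_tilt_ncchi2_convolution_chi2:
  assumes "\<sigma> > 0" "u > 0" "1 + 2 * l * \<sigma>\<^sup>2 = u"
  shows "exp_tilt (ncchi2 \<sigma> a \<star> chi2 \<sigma> k) (ncchi2 (\<sigma> / sqrt u) (a / u) \<star> chi2 (\<sigma> / sqrt u) k)
           (exp (- l * a\<^sup>2 / u - real (Suc k) * ln u / 2)) l"
proof -
  have "\<sigma> / sqrt u > 0"
    using assms by simp
  then have "exp_tilt (ncchi2 \<sigma> a \<star> chi2 \<sigma> k) (ncchi2 (\<sigma> / sqrt u) (a / u) \<star> chi2 (\<sigma> / sqrt u) k)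
               (exp (- l * a\<^sup>2 / u) / sqrt u * (1 / sqrt u) ^ k) l"
    using assms
    by (intro exp_tilt_convolution[OF _ _ _ _ _ _ _ _ exp_tilt_ncchi2[OF assms] exp_tilt_chi2[OF assms]])
       (simp_all add: finite_measure_chi2 finite_measure_ncchi2)
  also have "exp (- l * a\<^sup>2 / u) / sqrt u * (1 / sqrt u) ^ k = exp (- l * a\<^sup>2 / u) * (1 / sqrt u) ^ Suc k"
    by simp
  also have "\<dots> = exp (- l * a\<^sup>2 / u - real (Suc k) * ln u / 2)"
    unfolding power_inverse_sqrt_eq_exp[OF assms(2)] exp_add[symmetric] by (simp add: field_simps)
  finally show ?thesis .
qed

lemma exp_tilt_emeasure_le:
  assumes tilt: "exp_tilt M M' c l" and M': "prob_space M'" and c: "c \<ge> 0"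
    and sets: "sets M = sets borel" "sets M' = sets borel" and B[measurable]: "B \<in> sets borel"
    and B_le: "\<And>t. t \<in> B \<Longrightarrow> l * t \<le> l * t0"
  shows "emeasure M B \<le> ennreal (c * exp (l * t0))"
proof -
  interpret M': prob_space M' by fact
  have "emeasure M B = (\<integral>\<^sup>+t. indicator B t \<partial>M)"
    using sets by (subst nn_integral_indicator) auto
  also have "\<dots> = (\<integral>\<^sup>+t. ennreal (c * exp (l * t)) * indicator B t \<partial>M')"
    using tilt unfolding exp_tilt_def by auto
  also have "\<dots> \<le> (\<integral>\<^sup>+t. ennreal (c * exp (l * t0)) \<partial>M')"
  proof (rule nn_integral_mono)
    fix t
    have "c * exp (l * t) \<le> c * exp (l * t0)" if "t \<in> B"
      by (rule mult_left_mono[OF exp_mono[OF B_le[OF that]] c])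
    then show "ennreal (c * exp (l * t)) * indicator B t \<le> ennreal (c * exp (l * t0))"
      by (cases "t \<in> B") (auto intro: ennreal_leI)
  qed
  also have "\<dots> = ennreal (c * exp (l * t0))"
    by (simp add: M'.emeasure_space_1)
  finally show ?thesis .
qed

lemma exp_tilt_emeasure_ge:
  assumes tilt: "exp_tilt M M' c l" and c: "c \<ge> 0"
    and sets: "sets M = sets borel" "sets M' = sets borel" and B[measurable]: "B \<in> sets borel"
    and B_ge: "\<And>t. t \<in> B \<Longrightarrow> l * t0 \<le> l * t"
  shows "ennreal (c * exp (l * t0)) * emeasure M' B \<le> emeasure M B"
proof -
  have "ennreal (c * exp (l * t0)) * emeasure M' B = (\<integral>\<^sup>+t. ennreal (c * exp (l * t0)) * indicator B t \<partial>M')"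
    using sets by (simp add: nn_integral_cmult_indicator)
  also have "\<dots> \<le> (\<integral>\<^sup>+t. ennreal (c * exp (l * t)) * indicator B t \<partial>M')"
  proof (rule nn_integral_mono)
    fix t
    have "c * exp (l * t0) \<le> c * exp (l * t)" if "t \<in> B"
      by (rule mult_left_mono[OF exp_mono[OF B_ge[OF that]] c])
    then show "ennreal (c * exp (l * t0)) * indicator B t \<le> ennreal (c * exp (l * t)) * indicator B t"
      by (cases "t \<in> B") (auto intro: ennreal_leI)
  qed
  also have "\<dots> = (\<integral>\<^sup>+t. indicator B t \<partial>M)"
    using tilt unfolding exp_tilt_def by auto
  also have "\<dots> = emeasure M B"
    using sets by (subst nn_integral_indicator) auto
  finally show ?thesis .
qed

lemma exp_tilt_measure_atMost_bounds:
  assumes tilt: "exp_tilt M M' c l" and "prob_space M" "prob_space M'"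
    and "sets M = sets borel" "sets M' = sets borel" "c \<ge> 0" "l \<ge> 0"
  shows "measure M {..t} \<le> c * exp (l * t)"
    and "c * exp (l * (t - 1)) * measure M' {t - 1 .. t} \<le> measure M {..t}"
proof -
  interpret M: prob_space M by fact
  interpret M': prob_space M' by fact
  have "emeasure M {..t} \<le> ennreal (c * exp (l * t))"
    using assms by (intro exp_tilt_emeasure_le[OF tilt]) (auto intro: mult_left_mono)
  then show "measure M {..t} \<le> c * exp (l * t)"
    using assms by (simp add: M.emeasure_eq_measure)
  have "ennreal (c * exp (l * (t - 1))) * emeasure M' {t - 1 .. t} \<le> emeasure M {t - 1 .. t}"
    using assms by (intro exp_tilt_emeasure_ge[OF tilt]) (auto intro: mult_left_mono)
  also have "\<dots> \<le> emeasure M {..t}"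
    using assms by (intro emeasure_mono) auto
  finally show "c * exp (l * (t - 1)) * measure M' {t - 1 .. t} \<le> measure M {..t}"
    using assms by (simp add: M.emeasure_eq_measure M'.emeasure_eq_measure ennreal_mult[symmetric])
qed

section \<open>Concentration of the chi-square law\<close>

lemma chi2_tail_bound:
  assumes "\<sigma> > 0" "u > 0" and B[measurable]: "B \<in> sets borel"
    and B_le: "\<And>t. t \<in> B \<Longrightarrow> (u - 1) * t \<le> (u - 1) * t0"
  shows "measure (chi2 \<sigma> k) B \<le> exp ((u - 1) * t0 / (2 * \<sigma>\<^sup>2) - real k * ln u / 2)"
proof -
  define l where "l = (u - 1) / (2 * \<sigma>\<^sup>2)"
  have u: "1 + 2 * l * \<sigma>\<^sup>2 = u"
    using assms(1) by (simp add: l_def field_simps)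
  have B_le': "l * t \<le> l * t0" if "t \<in> B" for t
  proof -
    have "(u - 1) * t / (2 * \<sigma>\<^sup>2) \<le> (u - 1) * t0 / (2 * \<sigma>\<^sup>2)"
      using B_le[OF that] by (rule divide_right_mono) simp
    then show ?thesis
      by (simp add: l_def)
  qed
  interpret prob_space "chi2 \<sigma> k"
    using assms(1) by (rule prob_space_chi2)
  have "emeasure (chi2 \<sigma> k) B \<le> ennreal ((1 / sqrt u) ^ k * exp (l * t0))"
    by (rule exp_tilt_emeasure_le[OF exp_tilt_chi2[OF assms(1,2) u] prob_space_chi2 _ _ _ B B_le'])
       (use assms in auto)
  moreover have "(1 / sqrt u) ^ k * exp (l * t0) = exp ((u - 1) * t0 / (2 * \<sigma>\<^sup>2) - real k * ln u / 2)"
    unfolding power_inverse_sqrt_eq_exp[OF assms(2)] exp_add[symmetric] l_def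
    using assms(1) by (simp add: field_simps)
  ultimately show ?thesis
    by (simp add: emeasure_eq_measure)
qed

lemma chi2_upper_tail:
  assumes "\<sigma> > 0" "k \<ge> 4"
  shows "measure (chi2 \<sigma> k) {real k * \<sigma>\<^sup>2 + 6 * \<sigma>\<^sup>2 * sqrt k <..} \<le> exp (-2)"
proof -
  define p where "p = 1 / sqrt k"
  have "sqrt k \<ge> 2"
    using assms(2) real_sqrt_le_mono[of 4 "real k"] by simp
  then have p: "0 < p" "p \<le> 1/2" "real k * p = sqrt k" "real k * p\<^sup>2 = 1" "p * sqrt k = 1"
    unfolding p_def using assms(2) by (auto simp: power2_eq_square divide_simps)
  have "(1 - p - 1) * (real k * \<sigma>\<^sup>2 + 6 * \<sigma>\<^sup>2 * sqrt k) / (2 * \<sigma>\<^sup>2)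
      = - (real k * p + 6 * (p * sqrt k)) / 2"
    using assms(1) by (simp add: field_simps)
  also have "\<dots> = - sqrt k / 2 - 3"
    using p by simp
  finally have linear_part: "(1 - p - 1) * (real k * \<sigma>\<^sup>2 + 6 * \<sigma>\<^sup>2 * sqrt k) / (2 * \<sigma>\<^sup>2) = - sqrt k / 2 - 3" .
  have "real k * (- p - 2 * p\<^sup>2) \<le> real k * ln (1 - p)"
    using p by (intro mult_left_mono ln_one_minus_pos_lower_bound) auto
  also have "real k * (- p - 2 * p\<^sup>2) = - (real k * p) - 2 * (real k * p\<^sup>2)"
    by (simp add: algebra_simps)
  finally have log_part: "- sqrt k - 2 \<le> real k * ln (1 - p)"
    using p by simp
  have "measure (chi2 \<sigma> k) {real k * \<sigma>\<^sup>2 + 6 * \<sigma>\<^sup>2 * sqrt k <..}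
      \<le> exp ((1 - p - 1) * (real k * \<sigma>\<^sup>2 + 6 * \<sigma>\<^sup>2 * sqrt k) / (2 * \<sigma>\<^sup>2) - real k * ln (1 - p) / 2)"
    using assms(1) p by (intro chi2_tail_bound) auto
  also have "\<dots> \<le> exp (-2)"
    unfolding linear_part using log_part by simp
  finally show ?thesis .
qed

lemma chi2_lower_tail:
  assumes "\<sigma> > 0" "k \<ge> 4"
  shows "measure (chi2 \<sigma> k) {..< real k * \<sigma>\<^sup>2 - 6 * \<sigma>\<^sup>2 * sqrt k} \<le> exp (-2)"
proof -
  define p where "p = 1 / sqrt k"
  have "sqrt k \<ge> 2"
    using assms(2) real_sqrt_le_mono[of 4 "real k"] by simp
  then have p: "0 < p" "p \<le> 1/2" "real k * p = sqrt k" "real k * p\<^sup>2 = 1" "p * sqrt k = 1"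
    unfolding p_def using assms(2) by (auto simp: power2_eq_square divide_simps)
  have "(1 + p - 1) * (real k * \<sigma>\<^sup>2 - 6 * \<sigma>\<^sup>2 * sqrt k) / (2 * \<sigma>\<^sup>2)
      = (real k * p - 6 * (p * sqrt k)) / 2"
    using assms(1) by (simp add: field_simps)
  also have "\<dots> = sqrt k / 2 - 3"
    using p by simp
  finally have linear_part: "(1 + p - 1) * (real k * \<sigma>\<^sup>2 - 6 * \<sigma>\<^sup>2 * sqrt k) / (2 * \<sigma>\<^sup>2) = sqrt k / 2 - 3" .
  have "real k * (p - p\<^sup>2) \<le> real k * ln (1 + p)"
    using p by (intro mult_left_mono ln_one_plus_pos_lower_bound) auto
  also have "real k * (p - p\<^sup>2) = real k * p - real k * p\<^sup>2"
    by (simp add: algebra_simps)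
  finally have log_part: "sqrt k - 1 \<le> real k * ln (1 + p)"
    using p by simp
  have "measure (chi2 \<sigma> k) {..< real k * \<sigma>\<^sup>2 - 6 * \<sigma>\<^sup>2 * sqrt k}
      \<le> exp ((1 + p - 1) * (real k * \<sigma>\<^sup>2 - 6 * \<sigma>\<^sup>2 * sqrt k) / (2 * \<sigma>\<^sup>2) - real k * ln (1 + p) / 2)"
    using assms(1) p by (intro chi2_tail_bound) (auto intro: mult_left_mono)
  also have "\<dots> \<le> exp (-2)"
    unfolding linear_part using log_part by simp
  finally show ?thesis .
qed

lemma chi2_concentration:
  assumes "\<sigma> > 0" "k \<ge> 4"
  shows "1/2 \<le> measure (chi2 \<sigma> k) {real k * \<sigma>\<^sup>2 - 6 * \<sigma>\<^sup>2 * sqrt k .. real k * \<sigma>\<^sup>2 + 6 * \<sigma>\<^sup>2 * sqrt k}"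
    (is "_ \<le> measure _ {?lo .. ?hi}")
proof -
  interpret prob_space "chi2 \<sigma> k"
    using assms(1) by (rule prob_space_chi2)
  have "UNIV - {?lo .. ?hi} = {?hi <..} \<union> {..< ?lo}"
    by auto
  then have "1 - measure (chi2 \<sigma> k) {?lo .. ?hi} \<le> measure (chi2 \<sigma> k) {?hi <..} + measure (chi2 \<sigma> k) {..< ?lo}"
    using prob_compl[of "{?lo .. ?hi}"] measure_Un_le[of "{?hi <..}" "chi2 \<sigma> k" "{..< ?lo}"] by simp
  moreover have "exp (-2::real) \<le> 1/4"
    using exp_lower_Taylor_quadratic[of 2] by (simp add: exp_minus field_simps)
  ultimately show ?thesis
    using chi2_upper_tail[OF assms] chi2_lower_tail[OF assms] by linarith
qed

section \<open>Rotation invariance\<close>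

lemma borel_measurable_continuous_comp:
  fixes T :: "'a::topological_space \<Rightarrow> 'b::topological_space"
  assumes "G \<in> borel_measurable borel" "continuous_on UNIV T"
  shows "(\<lambda>p. G (T p)) \<in> borel_measurable borel"
  using measurable_comp[OF borel_measurable_continuous_onI[OF assms(2)] assms(1)] by (simp add: comp_def)

lemma lborel2_shear_snd:
  fixes G :: "real \<times> real \<Rightarrow> ennreal"
  assumes "G \<in> borel_measurable borel"
  shows "(\<integral>\<^sup>+x. \<integral>\<^sup>+y. G (x, y + t * x) \<partial>lborel \<partial>lborel) = (\<integral>\<^sup>+x. \<integral>\<^sup>+y. G (x, y) \<partial>lborel \<partial>lborel)"
proof (rule nn_integral_cong)
  fix x :: real
  have "(\<lambda>y. G (x, y)) \<in> borel_measurable borel"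
    using assms by (rule borel_measurable_continuous_comp) (intro continuous_intros)
  from nn_integral_real_affine[OF this, of 1 "t * x"]
  show "(\<integral>\<^sup>+y. G (x, y + t * x) \<partial>lborel) = (\<integral>\<^sup>+y. G (x, y) \<partial>lborel)"
    by (simp add: add.commute)
qed

lemma lborel2_shear_fst:
  fixes G :: "real \<times> real \<Rightarrow> ennreal"
  assumes G: "G \<in> borel_measurable borel"
  shows "(\<integral>\<^sup>+x. \<integral>\<^sup>+y. G (x + t * y, y) \<partial>lborel \<partial>lborel) = (\<integral>\<^sup>+x. \<integral>\<^sup>+y. G (x, y) \<partial>lborel \<partial>lborel)"
proof -
  have sheared: "(\<lambda>(x, y). G (x + t * y, y)) \<in> borel_measurable (lborel \<Otimes>\<^sub>M lborel)"
  proof -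
    have "(\<lambda>p. G (fst p + t * snd p, snd p)) \<in> borel_measurable borel"
      using G by (rule borel_measurable_continuous_comp) (intro continuous_intros)
    then show ?thesis
      unfolding lborel_prod by (simp add: case_prod_beta')
  qed
  have "(\<lambda>(x, y). G (x, y)) \<in> borel_measurable (lborel \<Otimes>\<^sub>M lborel)"
    unfolding lborel_prod using G by simp
  from lborel_pair.Fubini'[OF this]
  have "(\<integral>\<^sup>+x. \<integral>\<^sup>+y. G (x, y) \<partial>lborel \<partial>lborel) = (\<integral>\<^sup>+y. \<integral>\<^sup>+x. G (x, y) \<partial>lborel \<partial>lborel)"
    by simp
  also have "\<dots> = (\<integral>\<^sup>+y. \<integral>\<^sup>+x. G (x + t * y, y) \<partial>lborel \<partial>lborel)"
  proof (rule nn_integral_cong)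
    fix y :: real
    have "(\<lambda>x. G (x, y)) \<in> borel_measurable borel"
      using G by (rule borel_measurable_continuous_comp) (intro continuous_intros)
    from nn_integral_real_affine[OF this, of 1 "t * y"]
    show "(\<integral>\<^sup>+x. G (x, y) \<partial>lborel) = (\<integral>\<^sup>+x. G (x + t * y, y) \<partial>lborel)"
      by (simp add: add.commute)
  qed
  also have "\<dots> = (\<integral>\<^sup>+x. \<integral>\<^sup>+y. G (x + t * y, y) \<partial>lborel \<partial>lborel)"
    using lborel_pair.Fubini'[OF sheared] by simp
  finally show ?thesis ..
qed

text \<open>A rotation by \<open>\<theta>\<close> is the product of the shears with slopes \<open>-tan (\<theta>/2)\<close>,
  \<open>sin \<theta>\<close> and \<open>-tan (\<theta>/2)\<close>; here \<open>c = cos \<theta>\<close>, \<open>sn = sin \<theta>\<close>, \<open>T = tan (\<theta>/2)\<close>.\<close>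

lemma lborel2_rotation_invariant:
  fixes G :: "real \<times> real \<Rightarrow> ennreal"
  assumes G: "G \<in> borel_measurable borel" and cs: "c\<^sup>2 + sn\<^sup>2 = 1" and c: "c \<noteq> -1"
  shows "(\<integral>\<^sup>+x. \<integral>\<^sup>+y. G (c * x - sn * y, sn * x + c * y) \<partial>lborel \<partial>lborel)
       = (\<integral>\<^sup>+x. \<integral>\<^sup>+y. G (x, y) \<partial>lborel \<partial>lborel)"
proof -
  define T where "T = sn / (1 + c)"
  have "1 + c \<noteq> 0"
    using c by auto
  have sn2: "sn * sn = 1 - c * c"
    using cs by (simp add: power2_eq_square)
  have T_sn: "1 - T * sn = c"
    unfolding T_def using \<open>1 + c \<noteq> 0\<close> sn2 by (simp add: field_simps; simp add: algebra_simps)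
  have "2 - sn * T = 1 + c"
    unfolding T_def using \<open>1 + c \<noteq> 0\<close> sn2 by (simp add: field_simps; simp add: algebra_simps)
  have T_T: "T * (2 - sn * T) = sn"
    unfolding \<open>2 - sn * T = 1 + c\<close> unfolding T_def using \<open>1 + c \<noteq> 0\<close> by simp
  define G1 where "G1 = (\<lambda>p. G (fst p + (- T) * snd p, snd p))"
  define G2 where "G2 = (\<lambda>p. G1 (fst p, snd p + sn * fst p))"
  have G1: "G1 \<in> borel_measurable borel"
    unfolding G1_def using G by (rule borel_measurable_continuous_comp) (intro continuous_intros)
  have G2: "G2 \<in> borel_measurable borel"
    unfolding G2_def using G1 by (rule borel_measurable_continuous_comp) (intro continuous_intros)
  have "G (c * x - sn * y, sn * x + c * y) = G2 (x + (- T) * y, y)" for x y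
  proof -
    have "x + - T * y + - T * (y + sn * (x + - T * y)) = x * (1 - T * sn) - y * (T * (2 - sn * T))"
      by (simp add: algebra_simps)
    moreover have "y + sn * (x + - T * y) = sn * x + y * (1 - T * sn)"
      by (simp add: algebra_simps)
    ultimately show ?thesis
      unfolding G2_def G1_def T_sn T_T by (simp add: mult.commute)
  qed
  then have "(\<integral>\<^sup>+x. \<integral>\<^sup>+y. G (c * x - sn * y, sn * x + c * y) \<partial>lborel \<partial>lborel)
      = (\<integral>\<^sup>+x. \<integral>\<^sup>+y. G2 (x + (- T) * y, y) \<partial>lborel \<partial>lborel)"
    by simp
  also have "\<dots> = (\<integral>\<^sup>+x. \<integral>\<^sup>+y. G2 (x, y) \<partial>lborel \<partial>lborel)"
    by (rule lborel2_shear_fst[OF G2])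
  also have "\<dots> = (\<integral>\<^sup>+x. \<integral>\<^sup>+y. G1 (x, y + sn * x) \<partial>lborel \<partial>lborel)"
    unfolding G2_def by simp
  also have "\<dots> = (\<integral>\<^sup>+x. \<integral>\<^sup>+y. G1 (x, y) \<partial>lborel \<partial>lborel)"
    by (rule lborel2_shear_snd[OF G1])
  also have "\<dots> = (\<integral>\<^sup>+x. \<integral>\<^sup>+y. G (x + (- T) * y, y) \<partial>lborel \<partial>lborel)"
    unfolding G1_def by simp
  also have "\<dots> = (\<integral>\<^sup>+x. \<integral>\<^sup>+y. G (x, y) \<partial>lborel \<partial>lborel)"
    by (rule lborel2_shear_fst[OF G])
  finally show ?thesis .
qed

lemma ncchi2_uminus: "ncchi2 \<sigma> (- a) = ncchi2 \<sigma> a"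
proof (rule measure_eqI)
  fix A
  assume "A \<in> sets (ncchi2 \<sigma> (- a))"
  then have A[measurable]: "A \<in> sets borel"
    by simp
  have "(\<lambda>g. ennreal (normal_density 0 \<sigma> g) * indicator A ((g - a)\<^sup>2)) \<in> borel_measurable borel"
    by measurable
  from nn_integral_real_affine[OF this, of "-1" 0]
  have "emeasure (ncchi2 \<sigma> a) A
      = (\<integral>\<^sup>+g. ennreal (normal_density 0 \<sigma> (- g)) * indicator A ((- g - a)\<^sup>2) \<partial>lborel)"
    by (simp add: emeasure_ncchi2)
  also have "\<dots> = (\<integral>\<^sup>+g. ennreal (normal_density 0 \<sigma> g) * indicator A ((g - (- a))\<^sup>2) \<partial>lborel)"
  proof (rule nn_integral_cong)
    fix g :: real
    have "(- g - a)\<^sup>2 = (g - (- a))\<^sup>2"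
      by (simp add: power2_eq_square algebra_simps)
    moreover have "normal_density 0 \<sigma> (- g) = normal_density 0 \<sigma> g"
      by (simp add: normal_density_def)
    ultimately show "ennreal (normal_density 0 \<sigma> (- g)) * indicator A ((- g - a)\<^sup>2)
        = ennreal (normal_density 0 \<sigma> g) * indicator A ((g - (- a))\<^sup>2)"
      by simp
  qed
  also have "\<dots> = emeasure (ncchi2 \<sigma> (- a)) A"
    by (simp add: emeasure_ncchi2)
  finally show "emeasure (ncchi2 \<sigma> (- a)) A = emeasure (ncchi2 \<sigma> a) A" ..
qed simp

lemma ncchi2_abs: "ncchi2 \<sigma> \<bar>a\<bar> = ncchi2 \<sigma> a"
  by (cases "a \<ge> 0") (auto simp: ncchi2_uminus)

lemma emeasure_ncchi2_convolution:
  assumes "\<sigma> > 0" and A[measurable]: "A \<in> sets borel"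
  shows "emeasure (ncchi2 \<sigma> a \<star> ncchi2 \<sigma> b) A =
    (\<integral>\<^sup>+x. \<integral>\<^sup>+y. ennreal (normal_density 0 \<sigma> x * normal_density 0 \<sigma> y)
                    * indicator A ((x - a)\<^sup>2 + (y - b)\<^sup>2) \<partial>lborel \<partial>lborel)"
proof -
  have "emeasure (ncchi2 \<sigma> a \<star> ncchi2 \<sigma> b) A
      = (\<integral>\<^sup>+x. \<integral>\<^sup>+y. indicator A (x + y) \<partial>ncchi2 \<sigma> b \<partial>ncchi2 \<sigma> a)"
    using assms(1) by (intro convolution_emeasure') (auto simp: finite_measure_ncchi2)
  also have "\<dots> = (\<integral>\<^sup>+x. \<integral>\<^sup>+g. ennreal (normal_density 0 \<sigma> g) * indicator A (x + (g - b)\<^sup>2) \<partial>lborel \<partial>ncchi2 \<sigma> a)"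
    by (intro nn_integral_cong nn_integral_ncchi2) measurable
  also have "\<dots> = (\<integral>\<^sup>+h. ennreal (normal_density 0 \<sigma> h)
                    * (\<integral>\<^sup>+g. ennreal (normal_density 0 \<sigma> g) * indicator A ((h - a)\<^sup>2 + (g - b)\<^sup>2) \<partial>lborel) \<partial>lborel)"
    by (rule nn_integral_ncchi2) measurable
  also have "\<dots> = (\<integral>\<^sup>+x. \<integral>\<^sup>+y. ennreal (normal_density 0 \<sigma> x * normal_density 0 \<sigma> y)
                    * indicator A ((x - a)\<^sup>2 + (y - b)\<^sup>2) \<partial>lborel \<partial>lborel)"
    by (subst nn_integral_cmult[symmetric]) (auto simp: ennreal_mult mult.assoc intro!: nn_integral_cong)
  finally show ?thesis .
qed

lemma normal_density_mult:
  "normal_density 0 \<sigma> u * normal_density 0 \<sigma> v = (1 / sqrt (2 * pi * \<sigma>\<^sup>2))\<^sup>2 * exp (- (u\<^sup>2 + v\<^sup>2) / (2 * \<sigma>\<^sup>2))"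
  unfolding normal_density_def
  by (cases "\<sigma> = 0") (simp_all add: power2_eq_square exp_add[symmetric] field_simps)

lemma rotation_sum_sq:
  fixes c sn r a b x y :: real
  assumes "c\<^sup>2 + sn\<^sup>2 = 1" "r * c = a" "r * sn = - b" "r\<^sup>2 = a\<^sup>2 + b\<^sup>2"
  shows "(c * x - sn * y)\<^sup>2 + (sn * x + c * y)\<^sup>2 = x\<^sup>2 + y\<^sup>2"
    and "(c * x - sn * y - r)\<^sup>2 + (sn * x + c * y)\<^sup>2 = (x - a)\<^sup>2 + (y - b)\<^sup>2"
proof -
  have "(c * x - sn * y)\<^sup>2 + (sn * x + c * y)\<^sup>2 = (c\<^sup>2 + sn\<^sup>2) * (x\<^sup>2 + y\<^sup>2)"
    by (simp add: power2_eq_square algebra_simps)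
  then show norm: "(c * x - sn * y)\<^sup>2 + (sn * x + c * y)\<^sup>2 = x\<^sup>2 + y\<^sup>2"
    using assms(1) by simp
  have "(c * x - sn * y - r)\<^sup>2 + (sn * x + c * y)\<^sup>2
      = ((c * x - sn * y)\<^sup>2 + (sn * x + c * y)\<^sup>2) - 2 * ((r * c) * x - (r * sn) * y) + r\<^sup>2"
    by (simp add: power2_eq_square algebra_simps)
  then show "(c * x - sn * y - r)\<^sup>2 + (sn * x + c * y)\<^sup>2 = (x - a)\<^sup>2 + (y - b)\<^sup>2"
    unfolding norm assms(2-4) by (simp add: power2_eq_square algebra_simps)
qed

lemma ncchi2_convolution_rotate:
  assumes "\<sigma> > 0"
  shows "(ncchi2 \<sigma> a \<star> ncchi2 \<sigma> b) = (ncchi2 \<sigma> (sqrt (a\<^sup>2 + b\<^sup>2)) \<star> ncchi2 \<sigma> 0)"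
proof (cases "a\<^sup>2 + b\<^sup>2 = 0")
  case True
  then show ?thesis
    by (auto simp: add_nonneg_eq_0_iff)
next
  case False
  define r where "r = sqrt (a\<^sup>2 + b\<^sup>2)"
  have ab: "a\<^sup>2 + b\<^sup>2 > 0"
    by (metis False add_nonneg_nonneg zero_le_power2 order_le_less)
  then have r: "r > 0" "r\<^sup>2 = a\<^sup>2 + b\<^sup>2"
    unfolding r_def by auto
  define c where "c = \<bar>a\<bar> / r"
  define sn where "sn = - b / r"
  have cs: "c\<^sup>2 + sn\<^sup>2 = 1"
    using r ab unfolding c_def sn_def by (auto simp: power_divide add_divide_distrib[symmetric])
  have "c \<noteq> -1"
    unfolding c_def using r by (smt (verit) divide_nonneg_pos abs_ge_zero)
  have "(ncchi2 \<sigma> \<bar>a\<bar> \<star> ncchi2 \<sigma> b) = (ncchi2 \<sigma> r \<star> ncchi2 \<sigma> 0)"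
  proof (rule measure_eqI)
    fix A
    assume "A \<in> sets (ncchi2 \<sigma> \<bar>a\<bar> \<star> ncchi2 \<sigma> b)"
    then have A[measurable]: "A \<in> sets borel"
      by simp
    define G where "G = (\<lambda>p::real \<times> real. ennreal (normal_density 0 \<sigma> (fst p) * normal_density 0 \<sigma> (snd p))
                          * indicator A ((fst p - r)\<^sup>2 + (snd p - 0)\<^sup>2))"
    have [measurable]: "(\<lambda>p::real \<times> real. normal_density 0 \<sigma> (fst p) * normal_density 0 \<sigma> (snd p)) \<in> borel_measurable borel"
      unfolding normal_density_def using assms by (intro borel_measurable_continuous_onI continuous_intros) auto
    have [measurable]: "(\<lambda>p::real \<times> real. (fst p - r)\<^sup>2 + (snd p - 0)\<^sup>2) \<in> borel_measurable borel"
      by (intro borel_measurable_continuous_onI continuous_intros)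
    have G: "G \<in> borel_measurable borel"
      unfolding G_def by measurable
    have "r * c = \<bar>a\<bar>" "r * sn = - b" "r\<^sup>2 = \<bar>a\<bar>\<^sup>2 + b\<^sup>2"
      unfolding c_def sn_def using r by simp_all
    note rotated_sums = rotation_sum_sq[OF cs this]
    have rotated: "G (c * x - sn * y, sn * x + c * y)
        = ennreal (normal_density 0 \<sigma> x * normal_density 0 \<sigma> y) * indicator A ((x - \<bar>a\<bar>)\<^sup>2 + (y - b)\<^sup>2)" for x y
      unfolding G_def using rotated_sums[of x y] by (simp add: normal_density_mult)
    have "emeasure (ncchi2 \<sigma> \<bar>a\<bar> \<star> ncchi2 \<sigma> b) A
        = (\<integral>\<^sup>+x. \<integral>\<^sup>+y. G (c * x - sn * y, sn * x + c * y) \<partial>lborel \<partial>lborel)"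
      unfolding rotated by (rule emeasure_ncchi2_convolution[OF assms A])
    also have "\<dots> = (\<integral>\<^sup>+x. \<integral>\<^sup>+y. G (x, y) \<partial>lborel \<partial>lborel)"
      by (rule lborel2_rotation_invariant[OF G cs \<open>c \<noteq> -1\<close>])
    also have "\<dots> = emeasure (ncchi2 \<sigma> r \<star> ncchi2 \<sigma> 0) A"
      unfolding G_def by (simp add: emeasure_ncchi2_convolution[OF assms A])
    finally show "emeasure (ncchi2 \<sigma> \<bar>a\<bar> \<star> ncchi2 \<sigma> b) A = emeasure (ncchi2 \<sigma> r \<star> ncchi2 \<sigma> 0) A" .
  qed simp
  then show ?thesis
    by (simp add: ncchi2_abs r_def)
qed

section \<open>The law of the squared distance\<close>

lemma borel_measurable_sum_sq_dev [measurable]: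
  fixes n :: nat and s :: "nat \<Rightarrow> real"
  shows "(\<lambda>w. \<Sum>i<n. (w i - s i)\<^sup>2) \<in> borel_measurable (\<Pi>\<^sub>M i\<in>{0..<n}. gaussian \<sigma>)"
proof (rule borel_measurable_sum)
  fix i
  assume "i \<in> {..<n}"
  then have "(\<lambda>w. w i) \<in> measurable (\<Pi>\<^sub>M i\<in>{0..<n}. gaussian \<sigma>) (gaussian \<sigma>)"
    by (intro measurable_component_singleton) simp
  then have "(\<lambda>w. w i) \<in> borel_measurable (\<Pi>\<^sub>M i\<in>{0..<n}. gaussian \<sigma>)"
    by (simp add: measurable_cong_sets[OF refl sets_gaussian])
  then show "(\<lambda>w. (w i - s i)\<^sup>2) \<in> borel_measurable (\<Pi>\<^sub>M i\<in>{0..<n}. gaussian \<sigma>)"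
    by measurable
qed

lemma distr_sum_sq_dev_Suc:
  assumes "\<sigma> > 0"
  shows "distr (\<Pi>\<^sub>M i\<in>{0..<Suc n}. gaussian \<sigma>) borel (\<lambda>w. \<Sum>i<Suc n. (w i - s i)\<^sup>2)
    = (distr (\<Pi>\<^sub>M i\<in>{0..<n}. gaussian \<sigma>) borel (\<lambda>w. \<Sum>i<n. (w i - s i)\<^sup>2) \<star> ncchi2 \<sigma> (s n))"
    (is "distr ?P' borel ?S' = (distr ?P borel ?S \<star> _)")
proof (rule measure_eqI)
  interpret gaussian: prob_space "gaussian \<sigma>"
    using assms by (rule prob_space_gaussian)
  interpret product_sigma_finite "\<lambda>_. gaussian \<sigma>"
    unfolding product_sigma_finite_def using gaussian.sigma_finite_measure by simp
  interpret P: prob_space ?P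
    by (rule prob_space_PiM) (simp add: gaussian.prob_space_axioms)
  fix A
  assume "A \<in> sets (distr ?P' borel ?S')"
  then have A[measurable]: "A \<in> sets borel"
    by simp
  have "emeasure (distr ?P' borel ?S') A = (\<integral>\<^sup>+t. indicator A t \<partial>distr ?P' borel ?S')"
    by simp
  also have "\<dots> = (\<integral>\<^sup>+w. indicator A (?S' w) \<partial>?P')"
    using borel_measurable_sum_sq_dev[where n = "Suc n" and s = s and \<sigma> = \<sigma>] by (subst nn_integral_distr) auto
  also have "\<dots> = (\<integral>\<^sup>+w. indicator A (?S' w) \<partial>\<Pi>\<^sub>M i\<in>insert n {0..<n}. gaussian \<sigma>)"
    by (simp add: atLeast0_lessThan_Suc)
  also have "\<dots> = (\<integral>\<^sup>+x. \<integral>\<^sup>+g. indicator A (?S x + (g - s n)\<^sup>2) \<partial>gaussian \<sigma> \<partial>?P)"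
  proof -
    have "(\<lambda>w. indicator A (?S' w)) \<in> borel_measurable (\<Pi>\<^sub>M i\<in>insert n {0..<n}. gaussian \<sigma>)"
      using borel_measurable_sum_sq_dev[where n = "Suc n" and s = s and \<sigma> = \<sigma>] by (simp add: atLeast0_lessThan_Suc)
    then show ?thesis
      by (subst product_nn_integral_insert) (auto simp: lessThan_Suc add.commute)
  qed
  also have "\<dots> = (\<integral>\<^sup>+x. \<integral>\<^sup>+r. indicator A (?S x + r) \<partial>ncchi2 \<sigma> (s n) \<partial>?P)"
    unfolding ncchi2_def by (intro nn_integral_cong) (subst nn_integral_distr; auto)
  also have "\<dots> = (\<integral>\<^sup>+t. \<integral>\<^sup>+r. indicator A (t + r) \<partial>ncchi2 \<sigma> (s n) \<partial>distr ?P borel ?S)"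
  proof -
    interpret prob_space "ncchi2 \<sigma> (s n)"
      using assms by (rule prob_space_ncchi2)
    have "(\<lambda>t. \<integral>\<^sup>+r. indicator A (t + r) \<partial>ncchi2 \<sigma> (s n)) \<in> borel_measurable borel"
      by measurable
    then show ?thesis
      by (subst nn_integral_distr) auto
  qed
  also have "\<dots> = emeasure (distr ?P borel ?S \<star> ncchi2 \<sigma> (s n)) A"
    using P.prob_space_distr[OF borel_measurable_sum_sq_dev] assms
    by (intro convolution_emeasure'[symmetric]) (auto intro: prob_space.axioms(1) finite_measure_ncchi2)
  finally show "emeasure (distr ?P' borel ?S') A = emeasure (distr ?P borel ?S \<star> ncchi2 \<sigma> (s n)) A" .
qed simp

text \<open>Each new coordinate of the mean vector is rotated into the first one by
  \<open>ncchi2_convolution_rotate\<close>.\<close>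

lemma distr_sum_sq_dev:
  assumes "\<sigma> > 0"
  shows "distr (\<Pi>\<^sub>M i\<in>{0..<Suc n}. gaussian \<sigma>) borel (\<lambda>w. \<Sum>i<Suc n. (w i - s i)\<^sup>2)
    = (ncchi2 \<sigma> (sqrt (\<Sum>i<Suc n. (s i)\<^sup>2)) \<star> chi2 \<sigma> n)"
proof (induction n)
  case 0
  interpret P0: prob_space "\<Pi>\<^sub>M i\<in>{0..<0::nat}. gaussian \<sigma>"
    by (rule prob_space_PiM) (simp add: assms prob_space_gaussian)
  have "distr (\<Pi>\<^sub>M i\<in>{0..<0::nat}. gaussian \<sigma>) borel (\<lambda>w. \<Sum>i<0. (w i - s i)\<^sup>2) = return borel 0"
    using P0.distr_const[of 0 borel] by simp
  then have "distr (\<Pi>\<^sub>M i\<in>{0..<Suc 0}. gaussian \<sigma>) borel (\<lambda>w. \<Sum>i<Suc 0. (w i - s i)\<^sup>2)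
      = (return borel 0 \<star> ncchi2 \<sigma> (s 0))"
    using distr_sum_sq_dev_Suc[OF assms, of 0 s] by simp
  also have "\<dots> = (ncchi2 \<sigma> (s 0) \<star> return borel 0)"
    using assms
    by (intro convolution_commutative) (auto intro!: prob_space.axioms(1) prob_space_return finite_measure_ncchi2)
  finally show ?case
    by (simp add: ncchi2_abs)
next
  case (Suc n)
  define r where "r = sqrt (\<Sum>i<Suc n. (s i)\<^sup>2)"
  have r2: "r\<^sup>2 = (\<Sum>i<Suc n. (s i)\<^sup>2)"
    unfolding r_def by (simp add: sum_nonneg)
  note fin = finite_measure_ncchi2[OF assms] finite_measure_chi2[OF assms]
  have "distr (\<Pi>\<^sub>M i\<in>{0..<Suc (Suc n)}. gaussian \<sigma>) borel (\<lambda>w. \<Sum>i<Suc (Suc n). (w i - s i)\<^sup>2)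
      = ((ncchi2 \<sigma> r \<star> chi2 \<sigma> n) \<star> ncchi2 \<sigma> (s (Suc n)))"
    using distr_sum_sq_dev_Suc[OF assms, of "Suc n" s] Suc.IH unfolding r_def by simp
  also have "\<dots> = ((ncchi2 \<sigma> r \<star> ncchi2 \<sigma> (s (Suc n))) \<star> chi2 \<sigma> n)"
    by (simp add: fin convolution_associative[symmetric] convolution_commutative[of "chi2 \<sigma> n"])
  also have "(ncchi2 \<sigma> r \<star> ncchi2 \<sigma> (s (Suc n))) = (ncchi2 \<sigma> (sqrt (r\<^sup>2 + (s (Suc n))\<^sup>2)) \<star> ncchi2 \<sigma> 0)"
    by (rule ncchi2_convolution_rotate[OF assms])
  also have "((ncchi2 \<sigma> (sqrt (r\<^sup>2 + (s (Suc n))\<^sup>2)) \<star> ncchi2 \<sigma> 0) \<star> chi2 \<sigma> n)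
      = (ncchi2 \<sigma> (sqrt (r\<^sup>2 + (s (Suc n))\<^sup>2)) \<star> chi2 \<sigma> (Suc n))"
    by (simp add: fin convolution_associative[symmetric] convolution_commutative[of "ncchi2 \<sigma> 0"])
  also have "r\<^sup>2 + (s (Suc n))\<^sup>2 = (\<Sum>i<Suc (Suc n). (s i)\<^sup>2)"
    unfolding r2 by simp
  finally show ?case .
qed

definition gauss_ball_prob :: "nat \<Rightarrow> real \<Rightarrow> (nat \<Rightarrow> real) \<Rightarrow> real \<Rightarrow> real" where
  "gauss_ball_prob n y s z =
     measure (gauss_vec n y) {w \<in> space (gauss_vec n y). (\<Sum>i<n. (w i - s i)\<^sup>2) / real n \<le> z}"

lemma gauss_ball_prob_eq_convolution:
  assumes "y > 0" "n = Suc k"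
  shows "gauss_ball_prob n y s z
    = measure (ncchi2 (sqrt y) (sqrt (\<Sum>i<n. (s i)\<^sup>2)) \<star> chi2 (sqrt y) k) {..real n * z}"
proof -
  let ?P = "\<Pi>\<^sub>M i\<in>{0..<n}. gaussian (sqrt y)"
  have gauss_vec: "gauss_vec n y = ?P"
    unfolding gauss_vec_def gaussian_def ..
  have "{w \<in> space (gauss_vec n y). (\<Sum>i<n. (w i - s i)\<^sup>2) / real n \<le> z}
      = (\<lambda>w. \<Sum>i<n. (w i - s i)\<^sup>2) -` {..real n * z} \<inter> space ?P"
    unfolding gauss_vec using assms(2) by (auto simp: divide_le_eq mult.commute)
  then have "gauss_ball_prob n y s z = measure (distr ?P borel (\<lambda>w. \<Sum>i<n. (w i - s i)\<^sup>2)) {..real n * z}"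
    unfolding gauss_ball_prob_def by (subst measure_distr) (auto simp: gauss_vec)
  also have "distr ?P borel (\<lambda>w. \<Sum>i<n. (w i - s i)\<^sup>2)
      = (ncchi2 (sqrt y) (sqrt (\<Sum>i<n. (s i)\<^sup>2)) \<star> chi2 (sqrt y) k)"
    unfolding assms(2) using assms(1) by (intro distr_sum_sq_dev) simp
  finally show ?thesis .
qed

lemma gauss_ball_prob_mono:
  assumes "y > 0" "z \<le> z'"
  shows "gauss_ball_prob n y s z \<le> gauss_ball_prob n y s z'"
proof -
  interpret prob_space "gauss_vec n y"
    unfolding gauss_vec_def using assms(1)
    by (intro prob_space_PiM prob_space_normal_density) simp
  have "(\<lambda>w. \<Sum>i<n. (w i - s i)\<^sup>2) \<in> borel_measurable (gauss_vec n y)"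
    using borel_measurable_sum_sq_dev[where n = n and s = s and \<sigma> = "sqrt y"] by (simp add: gauss_vec_def gaussian_def)
  then show ?thesis
    unfolding gauss_ball_prob_def using assms(2)
    by (intro finite_measure_mono) (auto intro: order_trans)
qed

lemma gauss_ball_prob_le_1: "y > 0 \<Longrightarrow> gauss_ball_prob n y s z \<le> 1"
  unfolding gauss_ball_prob_def gauss_vec_def
  by (intro prob_space.prob_le_1 prob_space_PiM prob_space_normal_density) simp

section \<open>Mass of a unit window\<close>

lemma abs_sqrt_diff_le:
  assumes "W \<ge> 0" "b > 0"
  shows "\<bar>sqrt W - b\<bar> \<le> \<bar>W - b\<^sup>2\<bar> / b"
proof -
  have "\<bar>sqrt W - b\<bar> * b \<le> \<bar>sqrt W - b\<bar> * (sqrt W + b)"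
    using assms by (intro mult_left_mono) auto
  also have "\<dots> = \<bar>(sqrt W - b) * (sqrt W + b)\<bar>"
    using assms by (simp add: abs_mult)
  also have "(sqrt W - b) * (sqrt W + b) = W - b\<^sup>2"
    using assms by (simp add: algebra_simps power2_eq_square)
  finally show ?thesis
    using assms by (simp add: field_simps)
qed

lemma normal_density_le_of_abs_le:
  assumes "\<tau> > 0" "\<bar>g\<bar> \<le> M"
  shows "normal_density 0 \<tau> M \<le> normal_density 0 \<tau> g"
proof -
  have "g\<^sup>2 \<le> M\<^sup>2"
    using assms(2) by (metis abs_le_square_iff abs_of_nonneg abs_ge_zero order_trans)
  then have "- (M - 0)\<^sup>2 / (2 * \<tau>\<^sup>2) \<le> - (g - 0)\<^sup>2 / (2 * \<tau>\<^sup>2)"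
    using assms(1) by (simp add: divide_right_mono)
  then show ?thesis
    unfolding normal_density_def by (intro mult_left_mono) auto
qed

lemma emeasure_gaussian_interval_ge:
  assumes "\<tau> > 0" "lo \<le> hi" "\<bar>lo\<bar> \<le> M" "\<bar>hi\<bar> \<le> M"
  shows "ennreal (normal_density 0 \<tau> M * (hi - lo)) \<le> emeasure (gaussian \<tau>) {lo..hi}"
proof -
  have "ennreal (normal_density 0 \<tau> M * (hi - lo)) = ennreal (normal_density 0 \<tau> M) * emeasure lborel {lo..hi}"
    using assms(2) by (simp add: ennreal_mult)
  also have "\<dots> = (\<integral>\<^sup>+g. ennreal (normal_density 0 \<tau> M) * indicator {lo..hi} g \<partial>lborel)"
    by (simp add: nn_integral_cmult_indicator)
  also have "\<dots> \<le> (\<integral>\<^sup>+g. ennreal (normal_density 0 \<tau> g) * indicator {lo..hi} g \<partial>lborel)"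
  proof (rule nn_integral_mono)
    fix g
    have "normal_density 0 \<tau> M \<le> normal_density 0 \<tau> g" if "g \<in> {lo..hi}"
      using that assms by (intro normal_density_le_of_abs_le) auto
    then show "ennreal (normal_density 0 \<tau> M) * indicator {lo..hi} g
        \<le> ennreal (normal_density 0 \<tau> g) * indicator {lo..hi} g"
      by (cases "g \<in> {lo..hi}") (auto intro: ennreal_leI)
  qed
  also have "\<dots> = emeasure (gaussian \<tau>) {lo..hi}"
    unfolding gaussian_def by (subst emeasure_density) auto
  finally show ?thesis .
qed

lemma sqrt_diff_ge:
  fixes T K :: real
  assumes "1 \<le> T" "T \<le> K"
  shows "1 / (2 * sqrt K) \<le> sqrt T - sqrt (T - 1)"
proof -
  have "sqrt (T - 1) \<le> sqrt T" "sqrt T \<le> sqrt K" "sqrt K > 0"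
    using assms by auto
  then have "sqrt T + sqrt (T - 1) \<le> 2 * sqrt K" "sqrt K > 0"
    by linarith+
  moreover have "(sqrt T - sqrt (T - 1)) * (sqrt T + sqrt (T - 1)) = 1"
    using assms by (simp add: algebra_simps)
  moreover have "sqrt T + sqrt (T - 1) > 0"
    using assms by (simp add: add_pos_nonneg)
  ultimately have "1 / (2 * sqrt K) \<le> 1 / (sqrt T + sqrt (T - 1))"
    and "1 / (sqrt T + sqrt (T - 1)) = sqrt T - sqrt (T - 1)"
    by (auto intro: divide_left_mono simp: field_simps)
  then show ?thesis
    by simp
qed

lemma interval_subset_vimage_sq_dev:
  fixes T b :: real
  assumes "1 \<le> T"
  shows "{b - sqrt T .. b - sqrt (T - 1)} \<subseteq> (\<lambda>g. (g - b)\<^sup>2) -` {T - 1 .. T}"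
proof
  fix g
  assume "g \<in> {b - sqrt T .. b - sqrt (T - 1)}"
  then have g: "sqrt (T - 1) \<le> b - g" "b - g \<le> sqrt T"
    by auto
  have "0 \<le> sqrt (T - 1)"
    using assms by simp
  then have "0 \<le> b - g"
    using g(1) by linarith
  have "(sqrt (T - 1))\<^sup>2 \<le> (b - g)\<^sup>2" "(b - g)\<^sup>2 \<le> (sqrt T)\<^sup>2"
    using power_mono[OF g(1) \<open>0 \<le> sqrt (T - 1)\<close>, of 2] power_mono[OF g(2) \<open>0 \<le> b - g\<close>, of 2]
    by auto
  then show "g \<in> (\<lambda>g. (g - b)\<^sup>2) -` {T - 1 .. T}"
    using assms by (simp add: power2_commute)
qed

lemma ncchi2_window_ge:
  assumes \<tau>: "\<tau> > 0" and b: "b > 0" and T: "1 \<le> T" "\<bar>T - b\<^sup>2\<bar> \<le> D"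
    and A[measurable]: "A \<in> sets borel" and window: "{T - 1 .. T} \<subseteq> A"
  shows "ennreal (normal_density 0 \<tau> ((1 + D) / b) / (2 * sqrt (b\<^sup>2 + D))) \<le> emeasure (ncchi2 \<tau> b) A"
proof -
  define lo where "lo = b - sqrt T"
  define hi where "hi = b - sqrt (T - 1)"
  have dev: "\<bar>sqrt W - b\<bar> \<le> (1 + D) / b" if "W \<in> {T - 1, T}" for W
  proof -
    have "\<bar>sqrt W - b\<bar> \<le> \<bar>W - b\<^sup>2\<bar> / b"
      using that T b by (intro abs_sqrt_diff_le) auto
    also have "\<dots> \<le> (1 + D) / b"
      using that T b by (intro divide_right_mono) auto
    finally show ?thesis .
  qed
  have length: "1 / (2 * sqrt (b\<^sup>2 + D)) \<le> hi - lo"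
    using sqrt_diff_ge[of T "b\<^sup>2 + D"] T unfolding hi_def lo_def by auto
  have "normal_density 0 \<tau> ((1 + D) / b) / (2 * sqrt (b\<^sup>2 + D)) \<le> normal_density 0 \<tau> ((1 + D) / b) * (hi - lo)"
    using mult_left_mono[OF length normal_density_nonneg] by simp
  then have "ennreal (normal_density 0 \<tau> ((1 + D) / b) / (2 * sqrt (b\<^sup>2 + D)))
      \<le> ennreal (normal_density 0 \<tau> ((1 + D) / b) * (hi - lo))"
    by (rule ennreal_leI)
  also have "\<dots> \<le> emeasure (gaussian \<tau>) {lo..hi}"
    using dev[of T] dev[of "T - 1"] \<tau> length
    by (intro emeasure_gaussian_interval_ge) (auto simp: lo_def hi_def abs_minus_commute order_trans[OF _ length])
  also have "\<dots> \<le> emeasure (gaussian \<tau>) ((\<lambda>g. (g - b)\<^sup>2) -` A)"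
  proof (rule emeasure_mono)
    show "{lo..hi} \<subseteq> (\<lambda>g. (g - b)\<^sup>2) -` A"
      using interval_subset_vimage_sq_dev[OF T(1), of b] window unfolding lo_def hi_def by blast
    have "(\<lambda>g::real. (g - b)\<^sup>2) \<in> borel_measurable borel"
      by measurable
    from measurable_sets[OF this A] show "(\<lambda>g. (g - b)\<^sup>2) -` A \<in> sets (gaussian \<tau>)"
      by simp
  qed
  also have "\<dots> = emeasure (ncchi2 \<tau> b) A"
    unfolding ncchi2_def by (subst emeasure_distr) auto
  finally show ?thesis .
qed

lemma ncchi2_convolution_chi2_window_ge:
  assumes \<tau>: "\<tau> > 0" and b: "b > 0" and k: "k \<ge> 4"
    and large: "1 \<le> b\<^sup>2 + \<tau>\<^sup>2 - 6 * \<tau>\<^sup>2 * sqrt k"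
    and D: "D = \<tau>\<^sup>2 + 6 * \<tau>\<^sup>2 * sqrt k" and t0: "t0 = b\<^sup>2 + (real k + 1) * \<tau>\<^sup>2"
  shows "normal_density 0 \<tau> ((1 + D) / b) / (4 * sqrt (b\<^sup>2 + D))
           \<le> measure (ncchi2 \<tau> b \<star> chi2 \<tau> k) {t0 - 1 .. t0}"
proof -
  define q where "q = normal_density 0 \<tau> ((1 + D) / b) / (2 * sqrt (b\<^sup>2 + D))"
  define J where "J = {real k * \<tau>\<^sup>2 - 6 * \<tau>\<^sup>2 * sqrt k .. real k * \<tau>\<^sup>2 + 6 * \<tau>\<^sup>2 * sqrt k}"
  define A where "A = {t0 - 1 .. t0}"
  have "q \<ge> 0"
    unfolding q_def D by simp
  interpret chi2: prob_space "chi2 \<tau> k"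
    using \<tau> by (rule prob_space_chi2)
  interpret prob_space "ncchi2 \<tau> b \<star> chi2 \<tau> k"
    using \<tau> by (intro prob_space_convolution prob_space_ncchi2 prob_space_chi2) simp_all
  have "ennreal (q * (1 / 2)) = ennreal q * ennreal (1 / 2)"
    using \<open>q \<ge> 0\<close> by (intro ennreal_mult) auto
  also have "\<dots> \<le> ennreal q * emeasure (chi2 \<tau> k) J"
  proof (rule mult_left_mono)
    have "ennreal (1 / 2) \<le> ennreal (measure (chi2 \<tau> k) J)"
      using chi2_concentration[OF \<tau> k] unfolding J_def by (rule ennreal_leI)
    then show "ennreal (1 / 2) \<le> emeasure (chi2 \<tau> k) J"
      unfolding chi2.emeasure_eq_measure .
  qed simp
  also have "\<dots> = (\<integral>\<^sup>+r. ennreal q * indicator J r \<partial>chi2 \<tau> k)"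
    by (simp add: J_def nn_integral_cmult_indicator)
  also have "\<dots> \<le> (\<integral>\<^sup>+r. emeasure (ncchi2 \<tau> b) {a. a + r \<in> A} \<partial>chi2 \<tau> k)"
  proof (rule nn_integral_mono)
    fix r
    have "ennreal q \<le> emeasure (ncchi2 \<tau> b) {a. a + r \<in> A}" if "r \<in> J"
    proof -
      have "{a. a + r \<in> A} = {t0 - r - 1 .. t0 - r}"
        by (auto simp: A_def)
      moreover have "\<bar>t0 - r - b\<^sup>2\<bar> \<le> D" "1 \<le> t0 - r"
      proof -
        have "real k * \<tau>\<^sup>2 - 6 * \<tau>\<^sup>2 * sqrt k \<le> r" "r \<le> real k * \<tau>\<^sup>2 + 6 * \<tau>\<^sup>2 * sqrt k"
          using that unfolding J_def by auto
        moreover have "t0 = b\<^sup>2 + real k * \<tau>\<^sup>2 + \<tau>\<^sup>2" "0 \<le> \<tau>\<^sup>2"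
          unfolding t0 by (simp_all add: algebra_simps)
        ultimately show "\<bar>t0 - r - b\<^sup>2\<bar> \<le> D" "1 \<le> t0 - r"
          using large unfolding D abs_le_iff by linarith+
      qed
      ultimately show ?thesis
        unfolding q_def using \<tau> b by (intro ncchi2_window_ge) auto
    qed
    then show "ennreal q * indicator J r \<le> emeasure (ncchi2 \<tau> b) {a. a + r \<in> A}"
      by (cases "r \<in> J") auto
  qed
  also have "\<dots> = emeasure (chi2 \<tau> k \<star> ncchi2 \<tau> b) A"
    using \<tau> by (intro convolution_emeasure[symmetric])
      (auto simp: A_def finite_measure_ncchi2 finite_measure_chi2)
  also have "\<dots> = emeasure (ncchi2 \<tau> b \<star> chi2 \<tau> k) A"
    using \<tau> by (simp add: convolution_commutative finite_measure_ncchi2 finite_measure_chi2)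
  finally have "q * (1 / 2) \<le> measure (ncchi2 \<tau> b \<star> chi2 \<tau> k) A"
    using \<open>q \<ge> 0\<close> by (simp add: emeasure_eq_measure)
  then show ?thesis
    unfolding q_def A_def by simp
qed

lemma sqrt_of_nat_bounds:
  fixes k n :: nat
  assumes "k < n"
  shows "sqrt k \<le> sqrt n" "1 \<le> sqrt n" "sqrt n \<le> real n"
proof -
  show "sqrt k \<le> sqrt n" "1 \<le> sqrt n"
    using assms by auto
  from mult_left_mono[OF this(2), of "sqrt n"] show "sqrt n \<le> real n"
    by simp
qed

lemma window_large:
  fixes k n :: nat
  assumes "k < n" and \<beta>: "\<beta> > 0" and large: "(1 + 6 * \<tau>\<^sup>2) / \<beta>\<^sup>2 \<le> sqrt n"
  shows "1 \<le> real n * \<beta>\<^sup>2 + \<tau>\<^sup>2 - 6 * \<tau>\<^sup>2 * sqrt k"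
proof -
  note sqrt_n = sqrt_of_nat_bounds[OF assms(1)]
  have "1 + 6 * \<tau>\<^sup>2 \<le> \<beta>\<^sup>2 * sqrt n"
    using large \<beta> by (simp add: divide_le_eq mult.commute)
  from mult_right_mono[OF this, of "sqrt n"] have "(1 + 6 * \<tau>\<^sup>2) * sqrt n \<le> \<beta>\<^sup>2 * real n"
    by (simp add: mult.assoc)
  then have "sqrt n + 6 * (\<tau>\<^sup>2 * sqrt n) \<le> real n * \<beta>\<^sup>2"
    by (simp add: algebra_simps)
  moreover have "\<tau>\<^sup>2 * sqrt k \<le> \<tau>\<^sup>2 * sqrt n"
    using sqrt_n by (auto intro: mult_left_mono)
  ultimately have "1 \<le> real n * \<beta>\<^sup>2 + \<tau>\<^sup>2 - 6 * (\<tau>\<^sup>2 * sqrt k)"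
    using sqrt_n(2) zero_le_power2[of \<tau>] by linarith
  then show ?thesis
    by (simp add: mult.assoc)
qed

lemma window_bound_scaling:
  fixes k n :: nat
  assumes \<tau>: "\<tau> > 0" and \<beta>: "\<beta> > 0" and "k < n"
  defines "b \<equiv> sqrt n * \<beta>" and "D \<equiv> \<tau>\<^sup>2 + 6 * \<tau>\<^sup>2 * sqrt k"
  shows "normal_density 0 \<tau> ((1 + 7 * \<tau>\<^sup>2) / \<beta>) / (4 * sqrt (\<beta>\<^sup>2 + 7 * \<tau>\<^sup>2) * sqrt n)
           \<le> normal_density 0 \<tau> ((1 + D) / b) / (4 * sqrt (b\<^sup>2 + D))"
proof -
  note sqrt_n = sqrt_of_nat_bounds[OF assms(3)]
  have b: "b > 0" "b\<^sup>2 = real n * \<beta>\<^sup>2"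
    using \<beta> sqrt_n unfolding b_def by (simp_all add: power_mult_distrib)
  have "\<tau>\<^sup>2 * sqrt k \<le> \<tau>\<^sup>2 * sqrt n" "\<tau>\<^sup>2 * 1 \<le> \<tau>\<^sup>2 * sqrt n"
    using sqrt_n(1,2) by (intro mult_left_mono; simp)+
  then have "1 + \<tau>\<^sup>2 + 6 * (\<tau>\<^sup>2 * sqrt k) \<le> sqrt n + \<tau>\<^sup>2 * sqrt n + 6 * (\<tau>\<^sup>2 * sqrt n)"
    using sqrt_n(2) by linarith
  then have "1 + D \<le> (1 + 7 * \<tau>\<^sup>2) * sqrt n"
    unfolding D_def by (simp add: algebra_simps)
  then have "(1 + D) / b \<le> (1 + 7 * \<tau>\<^sup>2) * sqrt n / b"
    using b(1) by (intro divide_right_mono) auto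
  also have "\<dots> = (1 + 7 * \<tau>\<^sup>2) / \<beta>"
    using sqrt_n(2) \<beta> unfolding b_def by simp
  finally have "(1 + D) / b \<le> (1 + 7 * \<tau>\<^sup>2) / \<beta>" .
  then have numerator: "normal_density 0 \<tau> ((1 + 7 * \<tau>\<^sup>2) / \<beta>) \<le> normal_density 0 \<tau> ((1 + D) / b)"
    using \<tau> b(1) by (intro normal_density_le_of_abs_le) (auto simp: D_def)
  have "sqrt k \<le> real n" "1 \<le> real n"
    using sqrt_n by linarith+
  then have "\<tau>\<^sup>2 * sqrt k \<le> \<tau>\<^sup>2 * real n" "\<tau>\<^sup>2 * 1 \<le> \<tau>\<^sup>2 * real n"
    by (intro mult_left_mono; simp)+
  then have "real n * \<beta>\<^sup>2 + \<tau>\<^sup>2 + 6 * (\<tau>\<^sup>2 * sqrt k) \<le> real n * \<beta>\<^sup>2 + 7 * (\<tau>\<^sup>2 * real n)"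
    by linarith
  then have "b\<^sup>2 + D \<le> real n * (\<beta>\<^sup>2 + 7 * \<tau>\<^sup>2)"
    unfolding D_def b(2) by (simp add: algebra_simps)
  then have denominator: "sqrt (b\<^sup>2 + D) \<le> sqrt (\<beta>\<^sup>2 + 7 * \<tau>\<^sup>2) * sqrt n"
    by (simp add: real_sqrt_mult[symmetric] mult.commute)
  have "0 < sqrt (b\<^sup>2 + D)"
    using b(1) by (simp add: D_def add_pos_nonneg)
  then show ?thesis
    using numerator denominator by (intro frac_le) auto
qed

lemma ncchi2_convolution_chi2_window_ge_sqrt:
  assumes \<tau>: "\<tau> > 0" and \<beta>: "\<beta> > 0" and n: "n = Suc k" "k \<ge> 4"
    and large: "(1 + 6 * \<tau>\<^sup>2) / \<beta>\<^sup>2 \<le> sqrt n"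
  shows "normal_density 0 \<tau> ((1 + 7 * \<tau>\<^sup>2) / \<beta>) / (4 * sqrt (\<beta>\<^sup>2 + 7 * \<tau>\<^sup>2) * sqrt n)
           \<le> measure (ncchi2 \<tau> (sqrt n * \<beta>) \<star> chi2 \<tau> k) {real n * (\<beta>\<^sup>2 + \<tau>\<^sup>2) - 1 .. real n * (\<beta>\<^sup>2 + \<tau>\<^sup>2)}"
proof -
  have "k < n" "(sqrt n * \<beta>)\<^sup>2 = real n * \<beta>\<^sup>2" "sqrt n * \<beta> > 0"
    using n \<beta> by (simp_all add: power_mult_distrib)
  with window_large[OF \<open>k < n\<close> \<beta> large]
  have "normal_density 0 \<tau> ((1 + (\<tau>\<^sup>2 + 6 * \<tau>\<^sup>2 * sqrt k)) / (sqrt n * \<beta>))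
          / (4 * sqrt ((sqrt n * \<beta>)\<^sup>2 + (\<tau>\<^sup>2 + 6 * \<tau>\<^sup>2 * sqrt k)))
      \<le> measure (ncchi2 \<tau> (sqrt n * \<beta>) \<star> chi2 \<tau> k) {real n * (\<beta>\<^sup>2 + \<tau>\<^sup>2) - 1 .. real n * (\<beta>\<^sup>2 + \<tau>\<^sup>2)}"
    using n by (intro ncchi2_convolution_chi2_window_ge[OF \<tau>]) (simp_all add: algebra_simps)
  with window_bound_scaling[OF \<tau> \<beta> \<open>k < n\<close>] show ?thesis
    by linarith
qed

section \<open>The rate function\<close>

lemma cA_pos_le:
  fixes x y z :: real
  assumes "x > 0" "y > 0" "z > 0" "z \<le> x + y"
  shows "0 < cA x y z" "cA x y z \<le> 2 * x"
proof -
  have "y\<^sup>2 < y\<^sup>2 + 4 * x * z"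
    using assms by simp
  then show "0 < cA x y z"
    unfolding cA_def using assms(2) real_less_rsqrt by fastforce
  have "y\<^sup>2 + 4 * x * z \<le> (2 * x + y)\<^sup>2"
    using assms mult_left_mono[OF assms(4), of "4 * x"] by (simp add: power2_eq_square algebra_simps)
  then have "sqrt (y\<^sup>2 + 4 * x * z) \<le> 2 * x + y"
    using assms by (intro real_le_lsqrt) auto
  then show "cA x y z \<le> 2 * x"
    unfolding cA_def by simp
qed

lemma cA_quadratic:
  fixes x y z :: real
  assumes "0 \<le> y\<^sup>2 + 4 * x * z"
  shows "(cA x y z)\<^sup>2 + 2 * y * cA x y z = 4 * x * z"
proof -
  have "(cA x y z)\<^sup>2 + 2 * y * cA x y z = (sqrt (y\<^sup>2 + 4 * x * z))\<^sup>2 - y\<^sup>2"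
    unfolding cA_def by (simp add: power2_eq_square algebra_simps)
  then show ?thesis
    using assms by simp
qed

text \<open>Tilting by \<open>exp (- \<lambda> t)\<close> with \<open>\<lambda> = (u - 1) / (2 y)\<close> shrinks the noise variance to \<open>y / u\<close>
  and the signal to \<open>s / u\<close>; \<open>u = 2 x / cA x y z\<close> is the choice for which the tilted mean
  \<open>x / u\<^sup>2 + y / u\<close> of the normalised squared distance equals \<open>z\<close>.\<close>

lemma rate_f_tilt_parameters:
  fixes x y z :: real
  assumes x: "x > 0" and y: "y > 0" and z: "z > 0" and zxy: "z \<le> x + y"
    and u: "u = 2 * x / cA x y z"
  shows "1 \<le> u" "z = x / u\<^sup>2 + y / u" "rate_f x y z = (u - 1) / (2 * y) * (x / u - z) + ln u / 2"
proof -
  note A = cA_pos_le[OF x y z zxy]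
  have A_u: "cA x y z = 2 * x / u"
    using A x unfolding u by simp
  show "1 \<le> u"
    using A unfolding u by simp
  then have "u > 0"
    by simp
  have "4 * x * (x / u\<^sup>2 + y / u) = 4 * x * z"
    using cA_quadratic[of y x z] x y z unfolding A_u
    by (simp add: power_divide algebra_simps power2_eq_square)
  then show "z = x / u\<^sup>2 + y / u"
    using x by simp
  have "ln (cA x y z / (2 * x)) = - ln u"
    unfolding A_u using x \<open>u > 0\<close> by (simp add: ln_div)
  then show "rate_f x y z = (u - 1) / (2 * y) * (x / u - z) + ln u / 2"
    unfolding rate_f_def using zxy x y \<open>u > 0\<close> by (simp add: A_u field_simps)
qed

lemma rate_f_at_mean:
  assumes "x > 0" "y > 0"
  shows "rate_f x y (x + y) = 0"
proof -
  have "y\<^sup>2 + 4 * x * (x + y) = (2 * x + y)\<^sup>2"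
    by (simp add: power2_eq_square algebra_simps)
  then have "cA x y (x + y) = 2 * x"
    unfolding cA_def using assms by simp
  then show ?thesis
    unfolding rate_f_def using assms by (simp add: field_simps)
qed

section \<open>Large deviation bounds\<close>

lemma gauss_ball_prob_tilted_bounds:
  fixes x y z :: real
  assumes x: "x > 0" and y: "y > 0" and z: "z > 0" and zxy: "z \<le> x + y"
    and n: "n = Suc k" and s: "(\<Sum>i<n. (s i)\<^sup>2) = real n * x" and u: "u = 2 * x / cA x y z"
  shows "gauss_ball_prob n y s z \<le> exp (- real n * rate_f x y z)"
    and "exp (- real n * rate_f x y z - (u - 1) / (2 * y))
           * measure (ncchi2 (sqrt (y / u)) (sqrt (real n * x) / u) \<star> chi2 (sqrt (y / u)) k)
               {real n * z - 1 .. real n * z}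
         \<le> gauss_ball_prob n y s z"
proof -
  note param = rate_f_tilt_parameters[OF x y z zxy u]
  define l where "l = (u - 1) / (2 * y)"
  define a where "a = sqrt (real n * x)"
  define c where "c = exp (- l * a\<^sup>2 / u - real n * ln u / 2)"
  define L where "L = (ncchi2 (sqrt y) a \<star> chi2 (sqrt y) k)"
  define L' where "L' = (ncchi2 (sqrt (y / u)) (a / u) \<star> chi2 (sqrt (y / u)) k)"
  have "u > 0" "l \<ge> 0" "a\<^sup>2 = real n * x"
    using param(1) y x unfolding l_def a_def by auto
  have "1 + 2 * l * (sqrt y)\<^sup>2 = u"
    using y unfolding l_def by (simp add: field_simps)
  from exp_tilt_ncchi2_convolution_chi2[OF _ \<open>u > 0\<close> this, of a k]
  have tilt: "exp_tilt L L' c l"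
    using y n unfolding L_def L'_def c_def by (simp add: real_sqrt_divide)
  have "prob_space L" "prob_space L'"
    unfolding L_def L'_def using y \<open>u > 0\<close>
    by (intro prob_space_convolution prob_space_ncchi2 prob_space_chi2; simp)+
  note bounds = exp_tilt_measure_atMost_bounds[OF tilt this _ _ _ \<open>l \<ge> 0\<close>, unfolded L_def L'_def]
  have P: "gauss_ball_prob n y s z = measure L {..real n * z}"
    unfolding L_def a_def s[symmetric] using y n by (rule gauss_ball_prob_eq_convolution)
  have rate: "c * exp (l * (real n * z)) = exp (- real n * rate_f x y z)"
    unfolding c_def param(3) \<open>a\<^sup>2 = real n * x\<close> l_def exp_add[symmetric]
    using \<open>u > 0\<close> y by (simp add: field_simps)
  show "gauss_ball_prob n y s z \<le> exp (- real n * rate_f x y z)"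
    using bounds(1) unfolding P L_def rate[symmetric] by (simp add: c_def)
  have "c * exp (l * (real n * z - 1)) = c * exp (l * (real n * z)) * exp (- l)"
    by (simp add: right_diff_distrib exp_diff exp_minus field_simps)
  also have "\<dots> = exp (- real n * rate_f x y z) * exp (- l)"
    unfolding rate ..
  also have "\<dots> = exp (- real n * rate_f x y z - (u - 1) / (2 * y))"
    unfolding l_def by (simp add: exp_diff exp_minus field_simps)
  finally show "exp (- real n * rate_f x y z - (u - 1) / (2 * y))
           * measure (ncchi2 (sqrt (y / u)) (sqrt (real n * x) / u) \<star> chi2 (sqrt (y / u)) k)
               {real n * z - 1 .. real n * z}
         \<le> gauss_ball_prob n y s z"
    using bounds(2)[of "real n * z"] unfolding P L_def a_def by (simp add: c_def)
qed

lemma gauss_ball_prob_lower_bound_le_mean: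
  fixes x y z :: real
  assumes x: "x > 0" and y: "y > 0" and z: "z > 0" and zxy: "z \<le> x + y"
  shows "\<exists>\<kappa>>0. \<exists>N. \<forall>n\<ge>N. \<forall>s. (\<Sum>i<n. (s i)\<^sup>2) / real n = x \<longrightarrow>
           \<kappa> / sqrt n * exp (- real n * rate_f x y z) \<le> gauss_ball_prob n y s z"
proof -
  define u where "u = 2 * x / cA x y z"
  define \<tau> where "\<tau> = sqrt (y / u)"
  define \<beta> where "\<beta> = sqrt x / u"
  note param = rate_f_tilt_parameters[OF x y z zxy u_def]
  have "u > 0" "\<tau> > 0" "\<beta> > 0"
    using param(1) x y unfolding \<tau>_def \<beta>_def by auto
  have mean: "z = \<beta>\<^sup>2 + \<tau>\<^sup>2"
    using param(2) \<open>u > 0\<close> x y unfolding \<tau>_def \<beta>_def by (simp add: power_divide)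
  define \<kappa> where "\<kappa> = exp (- ((u - 1) / (2 * y))) * normal_density 0 \<tau> ((1 + 7 * \<tau>\<^sup>2) / \<beta>) / (4 * sqrt (\<beta>\<^sup>2 + 7 * \<tau>\<^sup>2))"
  define N where "N = max 5 (nat \<lceil>((1 + 6 * \<tau>\<^sup>2) / \<beta>\<^sup>2)\<^sup>2\<rceil>)"
  have "\<kappa> > 0"
    unfolding \<kappa>_def using \<open>\<tau> > 0\<close> \<open>\<beta> > 0\<close> by (simp add: normal_density_pos add_pos_nonneg)
  moreover have "\<kappa> / sqrt n * exp (- real n * rate_f x y z) \<le> gauss_ball_prob n y s z"
    if "N \<le> n" and s: "(\<Sum>i<n. (s i)\<^sup>2) / real n = x" for n s
  proof -
    obtain k where n: "n = Suc k" "k \<ge> 4"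
      using \<open>N \<le> n\<close> unfolding N_def by (cases n) auto
    have "((1 + 6 * \<tau>\<^sup>2) / \<beta>\<^sup>2)\<^sup>2 \<le> real n"
      using \<open>N \<le> n\<close> unfolding N_def by linarith
    then have large: "(1 + 6 * \<tau>\<^sup>2) / \<beta>\<^sup>2 \<le> sqrt n"
      using real_le_rsqrt by blast
    have "sqrt (real n * x) / u = sqrt n * \<beta>"
      unfolding \<beta>_def by (simp add: real_sqrt_mult)
    then have window: "normal_density 0 \<tau> ((1 + 7 * \<tau>\<^sup>2) / \<beta>) / (4 * sqrt (\<beta>\<^sup>2 + 7 * \<tau>\<^sup>2) * sqrt n)
        \<le> measure (ncchi2 (sqrt (y / u)) (sqrt (real n * x) / u) \<star> chi2 (sqrt (y / u)) k)
            {real n * z - 1 .. real n * z}"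
      using ncchi2_convolution_chi2_window_ge_sqrt[OF \<open>\<tau> > 0\<close> \<open>\<beta> > 0\<close> n large]
      unfolding mean \<tau>_def by simp
    have "\<kappa> / sqrt n * exp (- real n * rate_f x y z)
        = exp (- real n * rate_f x y z - (u - 1) / (2 * y))
            * (normal_density 0 \<tau> ((1 + 7 * \<tau>\<^sup>2) / \<beta>) / (4 * sqrt (\<beta>\<^sup>2 + 7 * \<tau>\<^sup>2) * sqrt n))"
      unfolding \<kappa>_def exp_diff exp_minus by (simp add: field_simps)
    also have "\<dots> \<le> exp (- real n * rate_f x y z - (u - 1) / (2 * y))
             * measure (ncchi2 (sqrt (y / u)) (sqrt (real n * x) / u) \<star> chi2 (sqrt (y / u)) k)
                 {real n * z - 1 .. real n * z}"
      using window by (rule mult_left_mono) simp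
    also have "\<dots> \<le> gauss_ball_prob n y s z"
      using s n by (intro gauss_ball_prob_tilted_bounds(2)[OF x y z zxy n(1) _ u_def]) (simp add: field_simps)
    finally show ?thesis .
  qed
  ultimately show ?thesis
    by blast
qed

lemma gauss_ball_prob_lower_bound:
  fixes x y z :: real
  assumes x: "x > 0" and y: "y > 0" and z: "z > 0"
  shows "\<exists>\<kappa>>0. \<exists>N. \<forall>n\<ge>N. \<forall>s. (\<Sum>i<n. (s i)\<^sup>2) / real n = x \<longrightarrow>
           \<kappa> / sqrt n * exp (- real n * rate_f x y z) \<le> gauss_ball_prob n y s z"
proof (cases "z \<le> x + y")
  case True
  then show ?thesis
    by (rule gauss_ball_prob_lower_bound_le_mean[OF x y z])
next
  case False
  then have rate: "rate_f x y z = rate_f x y (x + y)"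
    using rate_f_at_mean[OF x y] by (simp add: rate_f_def)
  obtain \<kappa> N where "\<kappa> > 0" and lower: "\<forall>n\<ge>N. \<forall>s. (\<Sum>i<n. (s i)\<^sup>2) / real n = x \<longrightarrow>
      \<kappa> / sqrt n * exp (- real n * rate_f x y (x + y)) \<le> gauss_ball_prob n y s (x + y)"
    using gauss_ball_prob_lower_bound_le_mean[OF x y _ order_refl] x y by auto
  have "gauss_ball_prob n y s (x + y) \<le> gauss_ball_prob n y s z" for n s
    using False by (intro gauss_ball_prob_mono[OF y]) simp
  then show ?thesis
    unfolding rate using \<open>\<kappa> > 0\<close> lower by (blast intro: order_trans)
qed

lemma gauss_ball_prob_upper_bound:
  fixes x y z :: real
  assumes x: "x > 0" and y: "y > 0" and z: "z > 0" and n: "n > 0"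
    and s: "(\<Sum>i<n. (s i)\<^sup>2) / real n = x"
  shows "gauss_ball_prob n y s z \<le> exp (- real n * rate_f x y z)"
proof (cases "z \<le> x + y")
  case True
  obtain k where "n = Suc k"
    using n gr0_conv_Suc by blast
  then show ?thesis
    using s n by (intro gauss_ball_prob_tilted_bounds(1)[OF x y z True \<open>n = Suc k\<close> _ refl]) (simp add: field_simps)
next
  case False
  then show ?thesis
    using gauss_ball_prob_le_1[OF y] by (simp add: rate_f_def)
qed

theorem mainTheorem9:
  fixes x y z :: real
  assumes "x > 0" and "y > 0" and "z > 0"
  shows "\<exists>\<kappa>>0. \<exists>N. \<forall>n\<ge>N. \<forall>s :: nat \<Rightarrow> real.
           (\<Sum>i<n. (s i)\<^sup>2) / real n = x \<longrightarrow>
           (let P = measure (gauss_vec n y)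
                      {w \<in> space (gauss_vec n y). (\<Sum>i<n. (w i - s i)\<^sup>2) / real n \<le> z}
            in \<kappa> / sqrt (real n) * exp (- real n * rate_f x y z) \<le> P
               \<and> P \<le> exp (- real n * rate_f x y z))"
proof -
  obtain \<kappa> N where "\<kappa> > 0" and lower: "\<forall>n\<ge>N. \<forall>s. (\<Sum>i<n. (s i)\<^sup>2) / real n = x \<longrightarrow>
      \<kappa> / sqrt n * exp (- real n * rate_f x y z) \<le> gauss_ball_prob n y s z"
    using gauss_ball_prob_lower_bound[OF assms] by blast
  have "\<forall>n\<ge>max N 1. \<forall>s. (\<Sum>i<n. (s i)\<^sup>2) / real n = x \<longrightarrow>
      \<kappa> / sqrt n * exp (- real n * rate_f x y z) \<le> gauss_ball_prob n y s z
      \<and> gauss_ball_prob n y s z \<le> exp (- real n * rate_f x y z)"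
    using lower gauss_ball_prob_upper_bound[OF assms] by auto
  with \<open>\<kappa> > 0\<close> show ?thesis
    unfolding gauss_ball_prob_def Let_def by blast
qed

end
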